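(* Let $p>q>1$ be relatively prime integers. If a sequence is $\frac{p}{q}$-automatic, then it is the image under a coding of a fixed point of a $q$-block substitution all of whose images have length $p$.
   Context: Let $A_p=\{0,1,\ldots,p-1\}$. For a word $w=w_\ell\cdots w_0\in A_p^*$, $\mathrm{val}_{\frac pq}(w)=\sum_{i=0}^{\ell}\frac{w_i}{q}\left(\frac pq\right)^i$. Every integer $n\ge 0$ has a unique representation $\mathrm{rep}_{\frac pq}(n)\in A_p^*$ not starting with $0$ such that $\mathrm{val}_{\frac pq}(\mathrm{rep}_{\frac pq}(n))=n$, with $\mathrm{rep}_{\frac pq}(0)=\varepsilon$. A sequence $\mathbf{x}$ over a finite alphabet $B$ is $\frac pq$-automatic if there is a deterministic finite automaton with output $(Q,q_0,A_p,\delta,\tau:Q\to B)$ with $x_n=\tau(\delta(q_0,\mathrm{rep}_{\frac pq}(n)))$ for all $n\ge0$. A coding is a letter-to-letter map. A $q$-block substitution is a map $g:C^q\to C^*$ acting on words by $g(w_0\cdots w_{q-1})g(w_q\cdots w_{2q-1})\cdots$; an infinite word $\mathbf{w}=w_0w_1\cdots$ is a fixed point of $g$ if $\mathbf{w}=g(w_0\cdots w_{q-1})g(w_q\cdots w_{2q-1})\cdots$. "All images have length $p$" means $|g(u)|=p$ for every $u\in C^q$. *)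

theory Defs
  imports Complex_Main
begin

text \<open>Words w = w_l ... w_0 are lists with the most significant digit (w_l) first.\<close>

definition val_pq :: "nat \<Rightarrow> nat \<Rightarrow> nat list \<Rightarrow> real" where
  "val_pq p q w = (\<Sum>i<length w. real (rev w ! i) / real q * (real p / real q) ^ i)"

definition rep_pq :: "nat \<Rightarrow> nat \<Rightarrow> nat \<Rightarrow> nat list" where
  "rep_pq p q n = (THE w. set w \<subseteq> {0..<p} \<and> (w = [] \<or> hd w \<noteq> 0) \<and> val_pq p q w = real n)"

definition pq_automatic :: "nat \<Rightarrow> nat \<Rightarrow> (nat \<Rightarrow> 'b) \<Rightarrow> bool" where
  "pq_automatic p q x \<longleftrightarrow>
     (\<exists>(Q::nat set) q0 (\<delta>::nat \<Rightarrow> nat \<Rightarrow> nat) (\<tau>::nat \<Rightarrow> 'b).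
        finite Q \<and> q0 \<in> Q \<and> (\<forall>s\<in>Q. \<forall>a<p. \<delta> s a \<in> Q) \<and>
        (\<forall>n. x n = \<tau> (foldl \<delta> q0 (rep_pq p q n))))"

definition block :: "nat \<Rightarrow> (nat \<Rightarrow> 'a) \<Rightarrow> nat \<Rightarrow> 'a list" where
  "block q w k = map w [k*q..<k*q+q]"

text \<open>w is a fixed point of the q-block substitution g:
  w = g(w_0..w_{q-1}) g(w_q..w_{2q-1}) ... (an infinite word).\<close>
definition block_fixed_point :: "nat \<Rightarrow> ('a list \<Rightarrow> 'a list) \<Rightarrow> (nat \<Rightarrow> 'a) \<Rightarrow> bool" where
  "block_fixed_point q g w \<longleftrightarrow>
     (\<forall>k. let u = concat (map (\<lambda>j. g (block q w j)) [0..<k]) in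
            \<forall>i<length u. w i = u ! i) \<and>
     (\<forall>N. \<exists>k. N \<le> length (concat (map (\<lambda>j. g (block q w j)) [0..<k])))"

end

theory Submission imports Defs begin

text \<open>Call \<open>\<lfloor>q n / p\<rfloor>\<close> the parent of \<open>n\<close>. Coprimality of \<open>p\<close> and \<open>q\<close>
  makes the representation of \<open>n > 0\<close> that of its parent followed by the digit
  \<open>q n mod p\<close>, so the state \<open>w n\<close> the automaton reaches on \<open>rep n\<close> is one
  transition away from the state of the parent. The parents of \<open>k p, \<dots>, k p + p - 1\<close>
  lie in \<open>k q, \<dots>, k q + q - 1\<close>, so the \<open>k\<close>-th length-\<open>p\<close> block of \<open>w\<close> is
  the image of its \<open>k\<close>-th length-\<open>q\<close> block under a fixed map: \<open>w\<close> is a fixed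
  point of a \<open>q\<close>-block substitution, and the output map is the coding. An extra
  initial state, fixed by the digit \<open>0\<close>, makes the recursion hold at \<open>n = 0\<close> too.\<close>

lemma val_pq_Nil [simp]: "val_pq p q [] = 0"
  by (simp add: val_pq_def)

lemma val_pq_snoc: "val_pq p q (v @ [a]) = (real a + real p * val_pq p q v) / real q"
proof -
  have "val_pq p q (v @ [a]) =
      (\<Sum>i<Suc (length v). real ((a # rev v) ! i) / real q * (real p / real q) ^ i)"
    by (simp add: val_pq_def)
  also have "\<dots> = real a / real q +
      (\<Sum>i<length v. real (rev v ! i) / real q * (real p / real q) ^ Suc i)"
    by (subst sum.lessThan_Suc_shift) simp
  also have "(\<Sum>i<length v. real (rev v ! i) / real q * (real p / real q) ^ Suc i) =
      real p / real q * val_pq p q v"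
    by (simp add: val_pq_def sum_distrib_left algebra_simps)
  finally show ?thesis
    by (simp add: add_divide_distrib)
qed

lemma val_pq_nonneg: "0 \<le> val_pq p q w"
  by (simp add: val_pq_def sum_nonneg)

lemma val_pq_scaled_nat: "\<exists>K::nat. real q ^ length v * val_pq p q v = real K"
proof (induction v rule: rev_induct)
  case Nil
  show ?case by simp
next
  case (snoc a v)
  then obtain K where K: "real q ^ length v * val_pq p q v = real K"
    by blast
  show ?case
  proof (cases "q = 0")
    case True
    then show ?thesis by (simp add: val_pq_snoc)
  next
    case False
    then have "real q ^ length (v @ [a]) * val_pq p q (v @ [a]) =
        real q ^ length v * (real a + real p * val_pq p q v)"
      by (simp add: val_pq_snoc)
    also have "\<dots> = real (q ^ length v * a + p * K)"
      using K by (simp add: algebra_simps)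
    finally show ?thesis
      by blast
  qed
qed

lemma foldl_closed:
  assumes "\<forall>s\<in>Q. \<forall>a<p. \<delta> s a \<in> Q" and "s \<in> Q" and "set ws \<subseteq> {0..<p}"
  shows "foldl \<delta> s ws \<in> Q"
  using assms(2,3) by (induction ws arbitrary: s) (auto simp: assms(1))

lemma foldl_cong_closed:
  assumes "\<forall>s\<in>Q. \<forall>a<p. \<delta> s a \<in> Q" and "\<forall>s\<in>Q. \<forall>a<p. \<delta>' s a = \<delta> s a"
    and "s \<in> Q" and "set ws \<subseteq> {0..<p}"
  shows "foldl \<delta>' s ws = foldl \<delta> s ws"
  using assms(3,4) by (induction ws arbitrary: s) (auto simp: assms(1,2))

definition canonical_word :: "nat \<Rightarrow> nat list \<Rightarrow> bool" where
  "canonical_word p w \<longleftrightarrow> set w \<subseteq> {0..<p} \<and> (w = [] \<or> hd w \<noteq> 0)"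

lemma canonical_word_butlast: "canonical_word p (v @ [a]) \<Longrightarrow> canonical_word p v"
  by (cases v) (auto simp: canonical_word_def)

context
  fixes p q :: nat
  assumes q_gt_1: "1 < q" and p_gt_q: "q < p" and coprime_pq: "coprime p q"
begin

text \<open>The natural number \<open>K = q\<^sup>l val v\<close> satisfies \<open>p K = q\<^sup>l (q n - a)\<close>, so
  coprimality forces \<open>q\<^sup>l dvd K\<close>: the value of \<open>v\<close> is itself a natural number.\<close>
lemma val_pq_snoc_eq_nat:
  assumes val: "val_pq p q (v @ [a]) = real n" and "a < p"
  shows "val_pq p q v = real (q * n div p)" and "a = q * n mod p"
proof -
  obtain K where K: "real q ^ length v * val_pq p q v = real K"
    using val_pq_scaled_nat by blast
  have digit_eq: "real a + real p * val_pq p q v = real q * real n"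
    using val q_gt_1 by (simp add: val_pq_snoc field_simps)
  have "real a \<le> real a + real p * val_pq p q v"
    using val_pq_nonneg by simp
  then have "a \<le> q * n"
    by (simp add: digit_eq flip: of_nat_mult)
  have "real (p * K) = real q ^ length v * (real p * val_pq p q v)"
    by (simp add: K[symmetric] algebra_simps)
  also have "\<dots> = real (q ^ length v * (q * n - a))"
    using digit_eq \<open>a \<le> q * n\<close> by (simp add: of_nat_diff)
  finally have "p * K = q ^ length v * (q * n - a)"
    by linarith
  then have "q ^ length v dvd K"
    using coprime_pq by (metis coprime_commute coprime_dvd_mult_right_iff coprime_power_left_iff dvd_triv_left)
  then obtain t where "K = q ^ length v * t"
    by blast
  then have t: "val_pq p q v = real t"
    using K q_gt_1 by simp
  then have "q * n = a + t * p"
    using digit_eq by (simp add: algebra_simps flip: of_nat_mult of_nat_add)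
  then show "val_pq p q v = real (q * n div p)" "a = q * n mod p"
    using t \<open>a < p\<close> by simp_all
qed

lemma canonical_word_val_zero:
  "canonical_word p w \<Longrightarrow> val_pq p q w = 0 \<Longrightarrow> w = []"
proof (induction w rule: rev_induct)
  case Nil
  show ?case by simp
next
  case (snoc a v)
  have "a < p"
    using snoc.prems by (auto simp: canonical_word_def)
  with snoc.prems have "val_pq p q v = 0" "a = 0"
    using val_pq_snoc_eq_nat[of v a 0] by auto
  with snoc canonical_word_butlast have "v = []"
    by blast
  with snoc.prems \<open>a = 0\<close> show ?case
    by (simp add: canonical_word_def)
qed

lemma canonical_word_unique:
  "canonical_word p w \<Longrightarrow> val_pq p q w = real n \<Longrightarrow>
   canonical_word p w' \<Longrightarrow> val_pq p q w' = real n \<Longrightarrow> w = w'"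
proof (induction w arbitrary: w' n rule: rev_induct)
  case Nil
  then show ?case
    using canonical_word_val_zero by (metis of_nat_eq_0_iff val_pq_Nil)
next
  case (snoc a v)
  show ?case
  proof (cases w' rule: rev_exhaust)
    case Nil
    with snoc.prems have "val_pq p q (v @ [a]) = 0"
      by simp
    with snoc.prems(1) canonical_word_val_zero show ?thesis
      by blast
  next
    case (snoc v' a')
    have "a < p" "a' < p"
      using snoc.prems snoc by (auto simp: canonical_word_def)
    moreover have "val_pq p q (v' @ [a']) = real n"
      using snoc.prems snoc by simp
    ultimately have v: "val_pq p q v = real (q * n div p)" "a = q * n mod p"
      and v': "val_pq p q v' = real (q * n div p)" "a' = q * n mod p"
      using val_pq_snoc_eq_nat snoc.prems by blast+
    have "canonical_word p v" "canonical_word p v'"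
      using snoc.prems snoc canonical_word_butlast by auto
    then have "v = v'"
      using snoc.IH v(1) v'(1) by blast
    with snoc v(2) v'(2) show ?thesis
      by simp
  qed
qed

lemma canonical_word_snoc:
  assumes "canonical_word p v" and "val_pq p q v = real (q * n div p)" and "0 < n"
  shows "canonical_word p (v @ [q * n mod p])" and "val_pq p q (v @ [q * n mod p]) = real n"
proof -
  have "p * (q * n div p) + q * n mod p = q * n"
    by simp
  then show "val_pq p q (v @ [q * n mod p]) = real n"
    using assms(2) q_gt_1 by (simp add: val_pq_snoc field_simps flip: of_nat_mult of_nat_add)
  have "q * n mod p \<noteq> 0" if "v = []"
  proof -
    have "q * n div p = 0"
      using that assms(2) by simp
    then have "q * n < p"
      using p_gt_q by (simp add: div_eq_0_iff)
    then show ?thesis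
      using \<open>0 < n\<close> q_gt_1 by simp
  qed
  then show "canonical_word p (v @ [q * n mod p])"
    using assms(1) p_gt_q by (cases v) (auto simp: canonical_word_def)
qed

lemma
  shows canonical_word_rep_pq: "canonical_word p (rep_pq p q n)"
    and val_pq_rep_pq: "val_pq p q (rep_pq p q n) = real n"
proof -
  have "\<exists>w. canonical_word p w \<and> val_pq p q w = real n"
  proof (induction n rule: less_induct)
    case (less n)
    show ?case
    proof (cases "n = 0")
      case True
      then show ?thesis
        by (intro exI[of _ "[]"]) (simp add: canonical_word_def)
    next
      case False
      have "q * n div p < n"
        using False p_gt_q by (simp add: div_less_iff_less_mult mult.commute)
      then obtain v where "canonical_word p v" "val_pq p q v = real (q * n div p)"
        using less by blast
      then show ?thesis
        using canonical_word_snoc False by blast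
    qed
  qed
  then have "\<exists>!w. canonical_word p w \<and> val_pq p q w = real n"
    using canonical_word_unique by blast
  from theI'[OF this] show "canonical_word p (rep_pq p q n)" "val_pq p q (rep_pq p q n) = real n"
    unfolding rep_pq_def canonical_word_def by simp_all
qed

lemma rep_pq_eqI: "canonical_word p w \<Longrightarrow> val_pq p q w = real n \<Longrightarrow> rep_pq p q n = w"
  using canonical_word_rep_pq val_pq_rep_pq canonical_word_unique by blast

lemma set_rep_pq: "set (rep_pq p q n) \<subseteq> {0..<p}"
  using canonical_word_rep_pq by (simp add: canonical_word_def)

lemma rep_pq_0 [simp]: "rep_pq p q 0 = []"
  by (rule rep_pq_eqI) (auto simp: canonical_word_def)

lemma rep_pq_step: "0 < n \<Longrightarrow> rep_pq p q n = rep_pq p q (q * n div p) @ [q * n mod p]"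
  using canonical_word_rep_pq val_pq_rep_pq canonical_word_snoc by (simp add: rep_pq_eqI)

text \<open>At \<open>n = 0\<close> both representations are empty, hence the hypothesis.\<close>
lemma foldl_rep_pq:
  assumes "\<delta> s\<^sub>0 0 = s\<^sub>0"
  shows "foldl \<delta> s\<^sub>0 (rep_pq p q n) =
    \<delta> (foldl \<delta> s\<^sub>0 (rep_pq p q (q * n div p))) (q * n mod p)"
  using assms rep_pq_step[of n] by (cases "n = 0") simp_all

text \<open>A fresh initial state fixed by the digit \<open>0\<close> changes no output,
  because representations never start with \<open>0\<close>.\<close>
lemma pq_automatic_zero_fixed:
  assumes "pq_automatic p q x"
  obtains Q :: "nat set" and s\<^sub>0 \<delta> and \<tau> :: "nat \<Rightarrow> 'b"
  where "finite Q" "s\<^sub>0 \<in> Q" "\<forall>s\<in>Q. \<forall>a<p. \<delta> s a \<in> Q" "\<delta> s\<^sub>0 0 = s\<^sub>0"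
    "\<forall>n. x n = \<tau> (foldl \<delta> s\<^sub>0 (rep_pq p q n))"
proof -
  obtain Q q\<^sub>0 \<delta> and \<tau> :: "nat \<Rightarrow> 'b"
    where Q: "finite Q" "q\<^sub>0 \<in> Q" and closed: "\<forall>s\<in>Q. \<forall>a<p. \<delta> s a \<in> Q"
      and x: "\<forall>n. x n = \<tau> (foldl \<delta> q\<^sub>0 (rep_pq p q n))"
    using assms unfolding pq_automatic_def by blast
  define s\<^sub>0 where "s\<^sub>0 = Suc (Max Q)"
  have "s\<^sub>0 \<notin> Q"
    using Max_ge[OF Q(1)] unfolding s\<^sub>0_def by (meson Suc_n_not_le_n)
  define \<delta>' where "\<delta>' s a = (if s = s\<^sub>0 then if a = 0 then s\<^sub>0 else \<delta> q\<^sub>0 a else \<delta> s a)" for s a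
  define \<tau>' where "\<tau>' s = (if s = s\<^sub>0 then \<tau> q\<^sub>0 else \<tau> s)" for s
  have closed': "\<forall>s\<in>insert s\<^sub>0 Q. \<forall>a<p. \<delta>' s a \<in> insert s\<^sub>0 Q"
    using Q(2) closed by (auto simp: \<delta>'_def)
  have agree: "\<forall>s\<in>Q. \<forall>a<p. \<delta>' s a = \<delta> s a"
    using \<open>s\<^sub>0 \<notin> Q\<close> by (auto simp: \<delta>'_def)
  have "x n = \<tau>' (foldl \<delta>' s\<^sub>0 (rep_pq p q n))" for n
  proof (cases "rep_pq p q n")
    case Nil
    then show ?thesis
      using x by (simp add: \<tau>'_def)
  next
    case (Cons a ws)
    then have "a \<noteq> 0" "a < p" "set ws \<subseteq> {0..<p}"
      using canonical_word_rep_pq[of n] by (auto simp: canonical_word_def)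
    then have "\<delta> q\<^sub>0 a \<in> Q"
      using Q(2) closed by blast
    have "foldl \<delta>' s\<^sub>0 (rep_pq p q n) = foldl \<delta>' (\<delta> q\<^sub>0 a) ws"
      using Cons \<open>a \<noteq> 0\<close> by (simp add: \<delta>'_def)
    also have "\<dots> = foldl \<delta> (\<delta> q\<^sub>0 a) ws"
      using closed agree \<open>\<delta> q\<^sub>0 a \<in> Q\<close> \<open>set ws \<subseteq> {0..<p}\<close> by (rule foldl_cong_closed)
    finally have "foldl \<delta>' s\<^sub>0 (rep_pq p q n) = foldl \<delta> q\<^sub>0 (rep_pq p q n)"
      using Cons by simp
    moreover have "foldl \<delta> q\<^sub>0 (rep_pq p q n) \<in> Q"
      using foldl_closed[OF closed Q(2) set_rep_pq] .
    ultimately show ?thesis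
      using x \<open>s\<^sub>0 \<notin> Q\<close> by (auto simp: \<tau>'_def)
  qed
  moreover have "\<delta>' s\<^sub>0 0 = s\<^sub>0"
    by (simp add: \<delta>'_def)
  ultimately show thesis
    using that[of "insert s\<^sub>0 Q" s\<^sub>0 \<delta>' \<tau>'] Q(1) closed' by blast
qed

end

text \<open>Position \<open>j\<close> of the image of the \<open>k\<close>-th block stands for
  \<open>n = k p + j\<close>: its parent \<open>\<lfloor>q n / p\<rfloor> = k q + \<lfloor>q j / p\<rfloor>\<close> lies in the
  block and its last digit is \<open>q n mod p = q j mod p\<close>.\<close>
definition block_substitution :: "nat \<Rightarrow> nat \<Rightarrow> ('a \<Rightarrow> nat \<Rightarrow> 'a) \<Rightarrow> 'a list \<Rightarrow> 'a list" where
  "block_substitution p q f u = map (\<lambda>j. f (u ! (q * j div p)) (q * j mod p)) [0..<p]"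

lemma length_block_substitution [simp]: "length (block_substitution p q f u) = p"
  by (simp add: block_substitution_def)

lemma mult_div_less: "j < p \<Longrightarrow> 0 < q \<Longrightarrow> q * j div p < (q::nat)"
  by (simp add: div_less_iff_less_mult mult.commute)

lemma block_substitution_closed:
  assumes "0 < q" and "length u = q" and "set u \<subseteq> Q" and "\<forall>s\<in>Q. \<forall>a<p. f s a \<in> Q"
  shows "set (block_substitution p q f u) \<subseteq> Q"
proof -
  have "f (u ! (q * j div p)) (q * j mod p) \<in> Q" if "j < p" for j
  proof -
    have "u ! (q * j div p) \<in> Q"
      using assms(2,3) mult_div_less[OF that \<open>0 < q\<close>] nth_mem by blast
    moreover have "q * j mod p < p"
      using that by simp
    ultimately show ?thesis
      using assms(4) by blast
  qed
  then show ?thesis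
    by (auto simp: block_substitution_def)
qed

lemma concat_map_upt_blocks: "concat (map (\<lambda>k. [k * p..<k * p + p]) [0..<m]) = [0..<m * p]"
proof (induction m)
  case (Suc m)
  have "[0..<m * p + p] = [0..<m * p] @ [m * p..<m * p + p]"
    by (rule upt_add_eq_append) simp
  with Suc show ?case
    by (simp add: add.commute)
qed simp

lemma block_fixed_point_block_substitution:
  assumes "0 < p" and "0 < q" and parent: "\<And>n. w n = f (w (q * n div p)) (q * n mod p)"
  shows "block_fixed_point q (block_substitution p q f) w"
proof -
  have image: "block_substitution p q f (block q w k) = map w [k * p..<k * p + p]" for k
  proof (rule nth_equalityI)
    fix j
    assume "j < length (block_substitution p q f (block q w k))"
    then have "j < p"
      by simp
    have "q * (k * p + j) = q * j + k * q * p"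
      by (simp add: algebra_simps)
    then have "q * (k * p + j) div p = k * q + q * j div p" "q * (k * p + j) mod p = q * j mod p"
      using \<open>0 < p\<close> by simp_all
    then show "block_substitution p q f (block q w k) ! j = map w [k * p..<k * p + p] ! j"
      using \<open>j < p\<close> mult_div_less[OF \<open>j < p\<close> \<open>0 < q\<close>] parent[of "k * p + j"]
      by (simp add: block_substitution_def block_def)
  qed (simp add: block_def)
  have prefix: "concat (map (\<lambda>k. block_substitution p q f (block q w k)) [0..<m]) = map w [0..<m * p]"
    for m
    by (simp add: image map_concat o_def flip: concat_map_upt_blocks)
  show ?thesis
    unfolding block_fixed_point_def prefix Let_def
  proof (intro conjI allI)
    show "\<exists>k. N \<le> length (map w [0..<k * p])" for N
      using \<open>0 < p\<close> by (intro exI[of _ N]) simp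
  qed simp
qed

theorem mainTheorem6:
  fixes p q :: nat and x :: "nat \<Rightarrow> 'b"
  assumes "q > 1" and "p > q" and "coprime p q"
    and "pq_automatic p q x"
  shows "\<exists>(C::nat set) (g::nat list \<Rightarrow> nat list) (w::nat \<Rightarrow> nat) (c::nat \<Rightarrow> 'b).
           finite C \<and>
           (\<forall>u. set u \<subseteq> C \<and> length u = q \<longrightarrow> set (g u) \<subseteq> C \<and> length (g u) = p) \<and>
           (\<forall>n. w n \<in> C) \<and>
           block_fixed_point q g w \<and>
           (\<forall>n. x n = c (w n))"
proof -
  obtain Q :: "nat set" and s\<^sub>0 \<delta> and \<tau> :: "nat \<Rightarrow> 'b"
    where "finite Q" "s\<^sub>0 \<in> Q" and closed: "\<forall>s\<in>Q. \<forall>a<p. \<delta> s a \<in> Q"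
      and "\<delta> s\<^sub>0 0 = s\<^sub>0" and x: "\<forall>n. x n = \<tau> (foldl \<delta> s\<^sub>0 (rep_pq p q n))"
    using pq_automatic_zero_fixed[OF assms] by blast
  define w where "w n = foldl \<delta> s\<^sub>0 (rep_pq p q n)" for n
  have "0 < q" "0 < p"
    using assms(1,2) by simp_all
  have parent: "w n = \<delta> (w (q * n div p)) (q * n mod p)" for n
    unfolding w_def using assms(1-3) \<open>\<delta> s\<^sub>0 0 = s\<^sub>0\<close> by (rule foldl_rep_pq)
  have "w n \<in> Q" for n
    unfolding w_def using foldl_closed[OF closed \<open>s\<^sub>0 \<in> Q\<close> set_rep_pq[OF assms(1-3)]] .
  moreover have "set (block_substitution p q \<delta> u) \<subseteq> Q" if "set u \<subseteq> Q" "length u = q" for u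
    using block_substitution_closed[OF \<open>0 < q\<close> that(2,1) closed] .
  moreover note block_fixed_point_block_substitution[where w = w and f = \<delta>, OF \<open>0 < p\<close> \<open>0 < q\<close> parent]
  ultimately show ?thesis
    using \<open>finite Q\<close> x unfolding w_def[symmetric]
    by (intro exI[of _ Q] exI[of _ "block_substitution p q \<delta>"] exI[of _ w] exI[of _ \<tau>]) auto
qed

end
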